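(* Let $\hat{\mathbf Q}=\tilde{\mathbf Q}_{st}+\tilde{\mathbf Q}_{\mathcal I}\varepsilon$ be an $n\times n$ dual quaternion Hermitian matrix with $\tilde{\mathbf Q}_{st}=(\tilde q_{1,ij})$ and $\tilde{\mathbf Q}_{\mathcal I}=(\tilde q_{2,ij})$. Suppose $\tilde q_{1,ij}=0$ and $\tilde q_{1,ii}\neq\tilde q_{1,jj}$ for all $i\neq j$. Then for each $i=1,\dots,n$, $\tilde q_{1,ii}+\tilde q_{2,ii}\varepsilon$ is an eigenvalue of $\hat{\mathbf Q}$ with corresponding eigenvector $\hat{\mathbf v}_i$ whose $i$-th component is $1$ and whose $j$-th component, for $j\neq i$, is $\dfrac{\tilde q_{2,ji}}{\tilde q_{1,ii}-\tilde q_{1,jj}}\varepsilon$.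
   Context: Quaternions $q=q_0+q_1\mathbf i+q_2\mathbf j+q_3\mathbf k$ with conjugate $q^\ast$; dual quaternions $q_{st}+q_{\mathcal I}\varepsilon$ with $\varepsilon$ commuting with quaternions, $\varepsilon\ne0$, $\varepsilon^2=0$, multiplied by $(p_{st}+p_{\mathcal I}\varepsilon)(q_{st}+q_{\mathcal I}\varepsilon)=p_{st}q_{st}+(p_{st}q_{\mathcal I}+p_{\mathcal I}q_{st})\varepsilon$. A dual quaternion matrix is Hermitian if it equals its conjugate transpose (so its diagonal entries are dual numbers, i.e. have real standard and dual parts). A dual quaternion vector $\hat{\mathbf x}$ is appreciable if its standard part is nonzero. A dual number $\hat\lambda$ is an eigenvalue of $\hat{\mathbf Q}$ with eigenvector $\hat{\mathbf x}$ if $\hat{\mathbf x}$ is appreciable and $\hat{\mathbf Q}\hat{\mathbf x}=\hat{\mathbf x}\hat\lambda$. *)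

theory Defs
  imports Main "HOL-Library.Complex_Order" Complex_Main
begin

datatype quat = Quat (q0: real) (q1: real) (q2: real) (q3: real)

instantiation quat :: ab_group_add
begin
definition "0 = Quat 0 0 0 0"
definition "p + q = Quat (q0 p + q0 q) (q1 p + q1 q) (q2 p + q2 q) (q3 p + q3 q)"
definition "- q = Quat (- q0 q) (- q1 q) (- q2 q) (- q3 q)"
definition "p - q = Quat (q0 p - q0 q) (q1 p - q1 q) (q2 p - q2 q) (q3 p - q3 q)"
instance
  by standard (auto simp: zero_quat_def plus_quat_def uminus_quat_def minus_quat_def)
end

definition qmult :: "quat \<Rightarrow> quat \<Rightarrow> quat" (infixl "\<otimes>q" 70) where
  "p \<otimes>q q = Quat
     (q0 p * q0 q - q1 p * q1 q - q2 p * q2 q - q3 p * q3 q)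
     (q0 p * q1 q + q1 p * q0 q + q2 p * q3 q - q3 p * q2 q)
     (q0 p * q2 q - q1 p * q3 q + q2 p * q0 q + q3 p * q1 q)
     (q0 p * q3 q + q1 p * q2 q - q2 p * q1 q + q3 p * q0 q)"

definition qcnj :: "quat \<Rightarrow> quat" where
  "qcnj q = Quat (q0 q) (- q1 q) (- q2 q) (- q3 q)"

definition qreal :: "real \<Rightarrow> quat" where
  "qreal r = Quat r 0 0 0"

datatype dquat = DQ (st: quat) (du: quat)

instantiation dquat :: ab_group_add
begin
definition "0 = DQ 0 0"
definition "p + q = DQ (st p + st q) (du p + du q)"
definition "- q = DQ (- st q) (- du q)"
definition "p - q = DQ (st p - st q) (du p - du q)"
instance
  by standard (auto simp: zero_dquat_def plus_dquat_def uminus_dquat_def minus_dquat_def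
      dquat.expand)
end

definition dqmult :: "dquat \<Rightarrow> dquat \<Rightarrow> dquat" (infixl "\<otimes>d" 70) where
  "p \<otimes>d q = DQ (st p \<otimes>q st q) (st p \<otimes>q du q + du p \<otimes>q st q)"

definition dqcnj :: "dquat \<Rightarrow> dquat" where
  "dqcnj q = DQ (qcnj (st q)) (qcnj (du q))"

definition dual_num :: "real \<Rightarrow> real \<Rightarrow> dquat" where
  "dual_num a b = DQ (qreal a) (qreal b)"

definition is_dual_number :: "dquat \<Rightarrow> bool" where
  "is_dual_number x \<longleftrightarrow> (\<exists>a b. x = dual_num a b)"

section \<open>n x n dual quaternion matrices (indices 0..n-1) and vectors\<close>

definition dq_hermitian :: "nat \<Rightarrow> (nat \<Rightarrow> nat \<Rightarrow> dquat) \<Rightarrow> bool" where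
  "dq_hermitian n Q \<longleftrightarrow> (\<forall>i<n. \<forall>j<n. Q i j = dqcnj (Q j i))"

definition dq_mat_vec :: "nat \<Rightarrow> (nat \<Rightarrow> nat \<Rightarrow> dquat) \<Rightarrow> (nat \<Rightarrow> dquat) \<Rightarrow> nat \<Rightarrow> dquat" where
  "dq_mat_vec n Q x = (\<lambda>i. \<Sum>j<n. Q i j \<otimes>d x j)"

definition appreciable :: "nat \<Rightarrow> (nat \<Rightarrow> dquat) \<Rightarrow> bool" where
  "appreciable n x \<longleftrightarrow> (\<exists>i<n. st (x i) \<noteq> 0)"

definition dq_eigenpair :: "nat \<Rightarrow> (nat \<Rightarrow> nat \<Rightarrow> dquat) \<Rightarrow> dquat \<Rightarrow> (nat \<Rightarrow> dquat) \<Rightarrow> bool" where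
  "dq_eigenpair n Q lam x \<longleftrightarrow> is_dual_number lam \<and> appreciable n x \<and>
     (\<forall>i<n. dq_mat_vec n Q x i = x i \<otimes>d lam)"

end

theory Submission
  imports Defs
begin

text \<open>
  Since the standard part of \<open>Q\<close> is diagonal with real entries \<open>a\<^sub>k\<close>, row \<open>k \<noteq> i\<close> of
  \<open>Q v\<^sub>i = v\<^sub>i Q\<^sub>i\<^sub>i\<close> only involves the entries \<open>k\<close> and \<open>i\<close> of \<open>v\<^sub>i\<close>, all products of two
  infinitesimal terms vanish, and what remains is the scalar equation
  \<open>q\<^sub>2\<^sub>,\<^sub>k\<^sub>i + a\<^sub>k x = x a\<^sub>i\<close> for the dual part \<open>x\<close> of the \<open>k\<close>-th entry, solved by
  \<open>x = q\<^sub>2\<^sub>,\<^sub>k\<^sub>i / (a\<^sub>i - a\<^sub>k)\<close> because real quaternions are central.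
  Row \<open>i\<close> reduces to \<open>Q\<^sub>i\<^sub>i \<cdot> 1 = 1 \<cdot> Q\<^sub>i\<^sub>i\<close>.
\<close>

lemma qmult_zero_left [simp]: "0 \<otimes>q p = 0"
  and qmult_zero_right [simp]: "p \<otimes>q 0 = 0"
  by (auto simp: qmult_def zero_quat_def)

lemma qmult_qreal_one_left [simp]: "qreal 1 \<otimes>q p = p"
  and qmult_qreal_one_right [simp]: "p \<otimes>q qreal 1 = p"
  by (auto simp: qmult_def qreal_def intro: quat.expand)

lemma qreal_one_neq_zero [simp]: "qreal 1 \<noteq> 0"
  by (simp add: qreal_def zero_quat_def)

lemma qreal_q0_if_qcnj_eq_self: "qcnj q = q \<Longrightarrow> q = qreal (q0 q)"
  by (cases q) (auto simp: qcnj_def qreal_def)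

lemma qmult_qreal_sylvester:
  assumes "a \<noteq> b"
  shows "p + qreal b \<otimes>q (qreal (1 / (a - b)) \<otimes>q p) = qreal (1 / (a - b)) \<otimes>q p \<otimes>q qreal a"
proof -
  have "a - b \<noteq> 0"
    using assms by simp
  then show ?thesis
    by (cases p) (simp add: qmult_def qreal_def plus_quat_def divide_simps algebra_simps)
qed

lemma dqmult_eq_zero_if_st_zero: "st p = 0 \<Longrightarrow> st q = 0 \<Longrightarrow> p \<otimes>d q = 0"
  by (simp add: dqmult_def zero_dquat_def)

lemma dqmult_dq_one_left [simp]: "DQ (qreal 1) 0 \<otimes>d p = p"
  and dqmult_dq_one_right [simp]: "p \<otimes>d DQ (qreal 1) 0 = p"
  by (simp_all add: dqmult_def)

lemma dqmult_dual_num_infinitesimal: "dual_num a b \<otimes>d DQ 0 p = DQ 0 (qreal a \<otimes>q p)"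
  and dqmult_infinitesimal_dual_num: "DQ 0 p \<otimes>d dual_num a b = DQ 0 (p \<otimes>q qreal a)"
  by (simp_all add: dqmult_def dual_num_def)

lemma dqmult_infinitesimal_sylvester:
  assumes "a \<noteq> b"
  shows "DQ 0 p + dual_num b c \<otimes>d DQ 0 (qreal (1 / (a - b)) \<otimes>q p)
           = DQ 0 (qreal (1 / (a - b)) \<otimes>q p) \<otimes>d dual_num a d"
  using assms
  by (simp add: dqmult_dual_num_infinitesimal dqmult_infinitesimal_dual_num plus_dquat_def
      qmult_qreal_sylvester)

lemma dual_num_if_dqcnj_eq_self: "dqcnj x = x \<Longrightarrow> x = dual_num (q0 (st x)) (q0 (du x))"
  by (cases x) (auto simp: dqcnj_def dual_num_def intro: qreal_q0_if_qcnj_eq_self)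

lemma dq_hermitian_diag_dual_num:
  "dq_hermitian n Q \<Longrightarrow> k < n \<Longrightarrow> Q k k = dual_num (q0 (st (Q k k))) (q0 (du (Q k k)))"
  unfolding dq_hermitian_def by (metis dual_num_if_dqcnj_eq_self)

lemma dq_mat_vec_eq_sum_support:
  assumes "S \<subseteq> {..<n}" and "\<And>j. j < n \<Longrightarrow> j \<notin> S \<Longrightarrow> Q k j \<otimes>d x j = 0"
  shows "dq_mat_vec n Q x k = (\<Sum>j\<in>S. Q k j \<otimes>d x j)"
  unfolding dq_mat_vec_def
  using assms by (intro sum.mono_neutral_right) auto

theorem lemma3p7:
  fixes n :: nat and Q :: "nat \<Rightarrow> nat \<Rightarrow> dquat"
  assumes herm: "dq_hermitian n Q"
    and offdiag: "\<forall>i<n. \<forall>j<n. i \<noteq> j \<longrightarrow> st (Q i j) = 0"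
    and distinct: "\<forall>i<n. \<forall>j<n. i \<noteq> j \<longrightarrow> st (Q i i) \<noteq> st (Q j j)"
  shows "\<forall>i<n. dq_eigenpair n Q (Q i i)
           (\<lambda>j. if j = i then DQ (qreal 1) 0
                else DQ 0 (qreal (1 / (q0 (st (Q i i)) - q0 (st (Q j j)))) \<otimes>q du (Q j i)))"
proof (intro allI impI)
  fix i assume i: "i < n"
  define a where "a k = q0 (st (Q k k))" for k
  define b where "b k = q0 (du (Q k k))" for k
  define v where "v j = (if j = i then DQ (qreal 1) 0
                         else DQ 0 (qreal (1 / (a i - a j)) \<otimes>q du (Q j i)))" for j
  have diag: "Q k k = dual_num (a k) (b k)" if "k < n" for k
    unfolding a_def b_def using dq_hermitian_diag_dual_num[OF herm that] .
  have products_vanish: "Q k j \<otimes>d v j = 0" if "j < n" "k < n" "j \<notin> {i, k}" for j k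
    using that offdiag by (intro dqmult_eq_zero_if_st_zero) (auto simp: v_def)
  have row: "dq_mat_vec n Q v k = v k \<otimes>d Q i i" if k: "k < n" for k
  proof (cases "k = i")
    case True
    then show ?thesis
      using dq_mat_vec_eq_sum_support[of "{i}" n Q k v] products_vanish i k by (simp add: v_def)
  next
    case False
    have gap: "a i \<noteq> a k"
      using distinct diag[OF i] diag[OF k] i k False by (metis dquat.sel(1) dual_num_def)
    obtain q where q: "Q k i = DQ 0 q"
      using offdiag i k False by (metis dquat.collapse)
    have "dq_mat_vec n Q v k = Q k i \<otimes>d v i + Q k k \<otimes>d v k"
      using dq_mat_vec_eq_sum_support[of "{i, k}" n Q k v] products_vanish i k False by simp
    also have "\<dots> = v k \<otimes>d Q i i"
      using False gap by (simp add: v_def q diag[OF i] diag[OF k] dqmult_infinitesimal_sylvester)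
    finally show ?thesis .
  qed
  show "dq_eigenpair n Q (Q i i) v"
    unfolding dq_eigenpair_def is_dual_number_def appreciable_def
    using row diag[OF i] i by (auto simp: v_def)
qed

end
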